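(* Let $A,B\subseteq\mathbb{N}$ with $A\cap B=\emptyset$ such that $\lim_{n\to\infty}\frac{B(n)-A(n)}{n}$ exists and is $>0$. Then there is a subset $D\subseteq B$ with $\lim_{n\to\infty}\frac{D(n)-A(n)}{n}=0$. In particular, $B\setminus D\in\mathcal{D}$.
   Context: $\mathbb{N}=\{1,2,3,\dots\}$. For $A\subseteq\mathbb{N}$ let $A(n)=|A\cap[1,n]|$. Let $\mathcal{D}$ be the collection of all $A\subseteq\mathbb{N}$ for which the asymptotic density $d(A)=\lim_{n\to\infty}\frac{A(n)}{n}$ exists. *)

theory Defs
  imports "HOL-Analysis.Analysis"
begin

definition cnt :: "nat set \<Rightarrow> nat \<Rightarrow> real" where
  "cnt A n = real (card (A \<inter> {1..n}))"

definition has_density :: "nat set \<Rightarrow> bool" where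
  "has_density A \<longleftrightarrow> (\<exists>d. (\<lambda>n. cnt A n / real n) \<longlonglongrightarrow> d)"

end

theory Submission
  imports Defs
begin

text \<open>Build \<open>D \<subseteq> B\<close> greedily: an element of \<open>B\<close> is taken exactly when \<open>D\<close> would otherwise
  fall behind \<open>A\<close>. Then \<open>D(n) \<le> A(n)\<close> always, and since \<open>A\<close> and \<open>B\<close> are disjoint the deficit
  \<open>A(n) - D(n)\<close> can only have grown since the last time \<open>D\<close> was caught up, at which point
  \<open>B(m) - A(m)\<close> was already at its running maximum. So \<open>D(n) - A(n) \<ge> g(n) - max\<^sub>m\<^sub>\<le>\<^sub>n g(m)\<close>
  with \<open>g = B - A\<close>, and because \<open>g(n)/n\<close> converges to a nonnegative limit, so does the
  running maximum of \<open>g\<close> divided by \<open>n\<close>, to the same limit.\<close>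

lemma running_Max_ratio_tendsto:
  fixes g :: "nat \<Rightarrow> real"
  assumes g: "(\<lambda>n. g n / real n) \<longlonglongrightarrow> c" and "c \<ge> 0"
  shows "(\<lambda>n. Max (g ` {..n}) / real n) \<longlonglongrightarrow> c"
proof (rule LIMSEQ_I)
  fix r :: real assume "r > 0"
  then obtain N where N: "\<And>n. n \<ge> N \<Longrightarrow> \<bar>g n / real n - c\<bar> < r / 2"
    using LIMSEQ_D[OF g, of "r / 2"] by auto
  define C where "C = \<bar>Max (g ` {..N})\<bar>"
  have Max_le: "Max (g ` {..n}) \<le> C + (c + r / 2) * real n" for n
  proof -
    have "Max (g ` {..n}) \<in> g ` {..n}" by (rule Max_in) auto
    then obtain m where "m \<le> n" and m: "Max (g ` {..n}) = g m" by (metis atMost_iff imageE)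
    show ?thesis
    proof (cases "m \<le> N")
      case True
      then have "g m \<le> Max (g ` {..N})" by (intro Max_ge) auto
      then have "g m \<le> C" unfolding C_def by linarith
      moreover have "0 \<le> (c + r / 2) * real n" using \<open>c \<ge> 0\<close> \<open>r > 0\<close> by simp
      ultimately show ?thesis using m by linarith
    next
      case False
      then have "\<bar>g m / real m - c\<bar> < r / 2" using N[of m] by simp
      then have "g m / real m < c + r / 2" by linarith
      then have "g m < (c + r / 2) * real m" using False by (simp add: field_simps)
      also have "\<dots> \<le> (c + r / 2) * real n"
        using \<open>m \<le> n\<close> \<open>c \<ge> 0\<close> \<open>r > 0\<close> by (intro mult_left_mono) auto
      finally show ?thesis using m unfolding C_def by linarith
    qed
  qed
  obtain K :: nat where K: "real K > 2 * C / r" using reals_Archimedean2 by blast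
  show "\<exists>n0. \<forall>n\<ge>n0. norm (Max (g ` {..n}) / real n - c) < r"
  proof (intro exI allI impI)
    fix n assume "max (max N K) 1 \<le> n"
    then have "n \<ge> N" "real n \<ge> real K" "real n > 0" by auto
    have "2 * C / r < real n" using K \<open>real n \<ge> real K\<close> by linarith
    then have "C < r / 2 * real n" using \<open>r > 0\<close> by (simp add: field_simps)
    moreover have "(c + r) * real n = (c + r / 2) * real n + r / 2 * real n"
      by (simp add: algebra_simps)
    ultimately have "Max (g ` {..n}) < (c + r) * real n" using Max_le[of n] by linarith
    then have "Max (g ` {..n}) / real n < c + r"
      using \<open>real n > 0\<close> by (simp only: pos_divide_less_eq)
    moreover have "c - r / 2 < g n / real n" using N[OF \<open>n \<ge> N\<close>] by linarith
    moreover have "g n / real n \<le> Max (g ` {..n}) / real n"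
      by (intro divide_right_mono Max_ge) auto
    ultimately show "norm (Max (g ` {..n}) / real n - c) < r" by simp
  qed
qed

lemma cnt_Suc: "cnt S (Suc n) = cnt S n + (if Suc n \<in> S then 1 else 0)"
proof -
  have "S \<inter> {1..Suc n} = (if Suc n \<in> S then insert (Suc n) (S \<inter> {1..n}) else S \<inter> {1..n})"
    by (auto simp: le_Suc_eq)
  then show ?thesis by (simp add: cnt_def)
qed

lemma cnt_Diff:
  assumes "D \<subseteq> B"
  shows "cnt (B - D) n = cnt B n - cnt D n"
proof -
  have "(B - D) \<inter> {1..n} = B \<inter> {1..n} - D \<inter> {1..n}" and "D \<inter> {1..n} \<subseteq> B \<inter> {1..n}"
    using assms by auto
  then show ?thesis
    by (simp add: cnt_def card_Diff_subset card_mono of_nat_diff)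
qed

fun greedy_count :: "nat set \<Rightarrow> nat set \<Rightarrow> nat \<Rightarrow> nat" where
  "greedy_count A B 0 = 0"
| "greedy_count A B (Suc n) =
     (if Suc n \<in> B \<and> greedy_count A B n < card (A \<inter> {1..Suc n})
      then Suc (greedy_count A B n) else greedy_count A B n)"

definition greedy_subset :: "nat set \<Rightarrow> nat set \<Rightarrow> nat set" where
  "greedy_subset A B =
     {Suc n | n. Suc n \<in> B \<and> greedy_count A B n < card (A \<inter> {1..Suc n})}"

lemma greedy_subset_subset: "greedy_subset A B \<subseteq> B"
  by (auto simp: greedy_subset_def)

lemma cnt_greedy_subset: "cnt (greedy_subset A B) n = real (greedy_count A B n)"
proof (induction n)
  case 0
  show ?case by (simp add: cnt_def)
next
  case (Suc n)
  have "Suc n \<in> greedy_subset A B \<longleftrightarrow>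
        Suc n \<in> B \<and> greedy_count A B n < card (A \<inter> {1..Suc n})"
    by (auto simp: greedy_subset_def)
  then show ?case using Suc cnt_Suc[of "greedy_subset A B" n] by auto
qed

lemma greedy_count_le: "greedy_count A B n \<le> card (A \<inter> {1..n})"
proof (induction n)
  case 0
  show ?case by simp
next
  case (Suc n)
  have "card (A \<inter> {1..n}) \<le> card (A \<inter> {1..Suc n})" by (intro card_mono) auto
  with Suc show ?case by auto
qed

lemma cnt_greedy_subset_le: "cnt (greedy_subset A B) n \<le> cnt A n"
  unfolding cnt_greedy_subset using greedy_count_le[of A B n] by (simp add: cnt_def)

lemma cnt_greedy_subset_deficit:
  assumes "A \<inter> B = {}"
  shows "\<exists>m\<le>n. (cnt B n - cnt A n) - (cnt B m - cnt A m)
                 \<le> cnt (greedy_subset A B) n - cnt A n"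
proof (induction n)
  case 0
  show ?case by (simp add: cnt_def)
next
  case (Suc n)
  then obtain m where "m \<le> n" and m: "(cnt B n - cnt A n) - (cnt B m - cnt A m)
                                         \<le> cnt (greedy_subset A B) n - cnt A n"
    by blast
  let ?take = "greedy_count A B n < card (A \<inter> {1..Suc n})"
  have A_Suc: "cnt A (Suc n) = cnt A n + (if Suc n \<in> A then 1 else 0)"
    and B_Suc: "cnt B (Suc n) = cnt B n + (if Suc n \<in> B then 1 else 0)"
    by (rule cnt_Suc)+
  have D_Suc: "cnt (greedy_subset A B) (Suc n)
                 = cnt (greedy_subset A B) n + (if Suc n \<in> B \<and> ?take then 1 else 0)"
    by (simp add: cnt_greedy_subset)
  consider "Suc n \<notin> B" | "Suc n \<in> B" ?take | "Suc n \<in> B" "\<not> ?take"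
    by blast
  then show ?case
  proof cases
    case 1
    then show ?thesis using m \<open>m \<le> n\<close> A_Suc B_Suc D_Suc by (intro exI[of _ m]) auto
  next
    case 2
    then have "Suc n \<notin> A" using assms by auto
    with 2 show ?thesis using m \<open>m \<le> n\<close> A_Suc B_Suc D_Suc by (intro exI[of _ m]) auto
  next
    case 3
    have "greedy_count A B n \<le> card (A \<inter> {1..Suc n})"
      using greedy_count_le[of A B "Suc n"] 3 by simp
    with 3 have "greedy_count A B (Suc n) = card (A \<inter> {1..Suc n})" by simp
    then have "cnt (greedy_subset A B) (Suc n) = cnt A (Suc n)"
      unfolding cnt_greedy_subset by (simp add: cnt_def)
    then show ?thesis by (intro exI[of _ "Suc n"]) auto
  qed
qed

theorem lemma3p5:
  fixes A B :: "nat set"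
  assumes "A \<subseteq> {1..}" and "B \<subseteq> {1..}"
    and "A \<inter> B = {}"
    and "\<exists>c>0. (\<lambda>n. (cnt B n - cnt A n) / real n) \<longlonglongrightarrow> c"
  shows "\<exists>D. D \<subseteq> B \<and> (\<lambda>n. (cnt D n - cnt A n) / real n) \<longlonglongrightarrow> 0
             \<and> has_density (B - D)"
proof -
  obtain c where "c > 0" and lim_g: "(\<lambda>n. (cnt B n - cnt A n) / real n) \<longlonglongrightarrow> c"
    using assms(4) by blast
  define D where "D = greedy_subset A B"
  define g where "g n = cnt B n - cnt A n" for n
  define M where "M n = Max (g ` {..n})" for n
  have lim_lower: "(\<lambda>n. (g n - M n) / real n) \<longlonglongrightarrow> 0"
    using tendsto_diff[OF lim_g running_Max_ratio_tendsto[of g c]] lim_g \<open>c > 0\<close>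
    unfolding g_def M_def diff_divide_distrib by simp
  have lower: "(g n - M n) / real n \<le> (cnt D n - cnt A n) / real n" for n
  proof -
    obtain m where "m \<le> n" and "g n - g m \<le> cnt D n - cnt A n"
      using cnt_greedy_subset_deficit[OF assms(3), of n] unfolding D_def g_def by blast
    moreover have "g m \<le> M n" unfolding M_def using \<open>m \<le> n\<close> by (intro Max_ge) auto
    ultimately show ?thesis by (intro divide_right_mono) auto
  qed
  have upper: "(cnt D n - cnt A n) / real n \<le> 0" for n
    using cnt_greedy_subset_le[of A B n] unfolding D_def by (intro divide_nonpos_nonneg) simp_all
  have lim_D: "(\<lambda>n. (cnt D n - cnt A n) / real n) \<longlonglongrightarrow> 0"
    using lower upper
    by (intro real_tendsto_sandwich[OF _ _ lim_lower tendsto_const] always_eventually) auto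
  have "cnt (B - D) n / real n = (cnt B n - cnt A n) / real n - (cnt D n - cnt A n) / real n" for n
    using cnt_Diff[OF greedy_subset_subset, of B A] unfolding D_def by (simp add: diff_divide_distrib)
  then have "(\<lambda>n. cnt (B - D) n / real n) \<longlonglongrightarrow> c - 0"
    using tendsto_diff[OF lim_g lim_D] by presburger
  then show ?thesis
    using lim_D greedy_subset_subset unfolding D_def has_density_def by blast
qed

end
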